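(* Assume conditions (C1) and (C2) stated in the context. Then the maps \[ (R^\star,R)\mapsto\mathcal G_{R^\star}(R)\qquad\text{and}\qquad(R^\star,R)\mapsto\mathcal L_{R^\star}(R)-\mathcal L_{R^\star}(R^\star) \] are continuous on $\mathcal F_{\mathcal P}^2$ (with the product topology of $\|\cdot\|_{\infty,\mathrm{supp}(\pi_0)}$).
   Context: $\mathcal X$ is a measurable space with distribution $d_0$; $\mathcal A$ is a separable metric space; $\pi_0:\mathcal X\to\Delta(\mathcal A)$ a Markov kernel, $S_x:=\mathrm{supp}(\pi_0(\cdot\mid x))$ its topological support, $\|f\|_{\infty,\mathrm{supp}(\pi_0)}:=\sup\{|f(x,a)|:x\in\mathcal X,a\in S_x\}$. A fixed measurable tie-breaking rule assigns to each measurable reward $R$ a measurable $a_R$ with $a_R(x)\in\arg\max_{a\in S_x}R(x,a)$. $\mathcal P$ is a set; each $p$ induces a $\pi_0$-centered (i.e. $\int R_p(x,a)\pi_0(da\mid x)=0$ for all $x$) measurable reward $R_p$; $\mathcal F_{\mathcal P}:=\{R_p:p\in\mathcal P\}$. (C1) $\mathcal F_{\mathcal P}$ is compact under $\|\cdot\|_{\infty,\mathrm{supp}(\pi_0)}$, and every $R\in\mathcal F_{\mathcal P}$ has $a\mapsto R(x,a)$ continuous on $S_x$ for $d_0$-a.e. $x$. (C2) There is $\Delta^{\mathcal P}_{\min}>0$ such that for every $p$, $d_0$-a.s., $a_{R_p}(X)$ is the unique maximizer and $R_p(X,a_{R_p}(X))-\sup_{a\in S_X,a\ne a_{R_p}(X)}R_p(X,a)\ge\Delta^{\mathcal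 P}_{\min}$. $K\ge2$; $\mathbf v_R(x,\mathbf a)=(R(x,a_1),\dots,R(x,a_K))$; $P_R(y=k\mid x,\mathbf a)=e^{R(x,a_k)}/\sum_\ell e^{R(x,a_\ell)}$; $\ell(\mathbf v,y)=\log\sum_ke^{v_k}-v_y$. For a truth reward $R^\star\in\mathcal F_{\mathcal P}$: $\mathcal G_{R^\star}(R):=\mathbb E_{X\sim d_0}[R^\star(X,a_{R^\star}(X))-R^\star(X,a_R(X))]$ and $\mathcal L_{R^\star}(R):=\mathbb E[\ell(\mathbf v_R(X,\mathbf A),Y)]$ with $X\sim d_0$, $\mathbf A\sim\pi_0(\cdot\mid X)^{\otimes K}$, $Y\sim P_{R^\star}(\cdot\mid X,\mathbf A)$. *)

theory Defs
  imports "HOL-Probability.Probability"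
begin

definition topo_support :: "'a::topological_space measure \<Rightarrow> 'a set" where
  "topo_support \<mu> = {a. \<forall>U. open U \<longrightarrow> a \<in> U \<longrightarrow> emeasure \<mu> U > 0}"

text \<open>Sup-distance of two rewards on the support S x of the reference policy
  (extended-real valued: the sup-norm of the difference on supp pi0).\<close>
definition supp_dist :: "('x \<Rightarrow> 'a set) \<Rightarrow> ('x \<Rightarrow> 'a \<Rightarrow> real) \<Rightarrow> ('x \<Rightarrow> 'a \<Rightarrow> real) \<Rightarrow> ereal" where
  "supp_dist S R R' = (SUP z \<in> Sigma UNIV S. ereal \<bar>R (fst z) (snd z) - R' (fst z) (snd z)\<bar>)"

definition supp_top :: "('x \<Rightarrow> 'a set) \<Rightarrow> ('x \<Rightarrow> 'a \<Rightarrow> real) topology" where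
  "supp_top S = topology (\<lambda>U. \<forall>R\<in>U. \<exists>e>0. \<forall>R'. supp_dist S R R' < ereal e \<longrightarrow> R' \<in> U)"

definition choice_prob :: "nat \<Rightarrow> (nat \<Rightarrow> real) \<Rightarrow> nat \<Rightarrow> real" where
  "choice_prob K v y = exp (v y) / (\<Sum>l<K. exp (v l))"

definition logloss :: "nat \<Rightarrow> (nat \<Rightarrow> real) \<Rightarrow> nat \<Rightarrow> real" where
  "logloss K v y = ln (\<Sum>k<K. exp (v k)) - v y"

text \<open>Suboptimality gap G_{R*}(R), with a the tie-breaking rule.\<close>
definition gap_G :: "'x measure \<Rightarrow> (('x \<Rightarrow> 'a \<Rightarrow> real) \<Rightarrow> 'x \<Rightarrow> 'a)
     \<Rightarrow> ('x \<Rightarrow> 'a \<Rightarrow> real) \<Rightarrow> ('x \<Rightarrow> 'a \<Rightarrow> real) \<Rightarrow> real" where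
  "gap_G d0 amax Rs R = (\<integral>x. Rs x (amax Rs x) - Rs x (amax R x) \<partial>d0)"

text \<open>Population loss L_{R*}(R): X ~ d0, A ~ pi0(.|X)^K (indices {..<K}),
  Y ~ P_{R*}(.|X,A); the expectation over the finite label Y is written as a sum.\<close>
definition pop_loss :: "'x measure \<Rightarrow> ('x \<Rightarrow> 'a measure) \<Rightarrow> nat
     \<Rightarrow> ('x \<Rightarrow> 'a \<Rightarrow> real) \<Rightarrow> ('x \<Rightarrow> 'a \<Rightarrow> real) \<Rightarrow> real" where
  "pop_loss d0 \<pi>0 K Rs R =
     (\<integral>x. (\<integral>as. (\<Sum>y<K. choice_prob K (\<lambda>k. Rs x (as k)) y * logloss K (\<lambda>k. R x (as k)) y)
            \<partial>(PiM {..<K} (\<lambda>_. \<pi>0 x))) \<partial>d0)"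

end

theory Submission
  imports Defs
begin

text \<open>
  Both maps are locally Lipschitz for the sup-distance on the support.
  For the gap, the margin condition (C2) freezes the tie-broken maximiser: a reward within
  \<open>\<Delta>/2\<close> of \<open>R\<close> on the support has, almost surely, the same maximiser as \<open>R\<close>, so near
  \<open>(R\<^sup>\<star>, R)\<close> the gap only moves through the values of \<open>R\<^sup>\<star>\<close> at two frozen actions.
  For the loss, log-sum-exp is 1-Lipschitz and a perturbation of size \<open>\<delta>\<close> changes each
  softmax probability by a factor between \<open>exp (-2\<delta>)\<close> and \<open>exp (2\<delta>)\<close>; since the \<open>K\<close> sampled
  actions lie almost surely in the support, the expected log-loss moves by \<open>O(\<delta>)\<close>.
\<close>

section \<open>The sup-distance on the support and its topology\<close>

lemma abs_le_supp_dist: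
  assumes "a \<in> S x"
  shows "ereal \<bar>R x a - R' x a\<bar> \<le> supp_dist S R R'"
  unfolding supp_dist_def using assms by (intro SUP_upper2[of "(x, a)"]) auto

lemma abs_less_of_supp_dist_less:
  assumes "supp_dist S R R' < ereal e" "a \<in> S x"
  shows "\<bar>R x a - R' x a\<bar> < e"
  using le_less_trans[OF abs_le_supp_dist[where S=S and x=x, OF assms(2)] assms(1)] by simp

lemma supp_dist_le_iff:
  "supp_dist S R R' \<le> ereal e \<longleftrightarrow> (\<forall>x. \<forall>a\<in>S x. \<bar>R x a - R' x a\<bar> \<le> e)"
  unfolding supp_dist_def by (auto simp: SUP_le_iff)

lemma supp_dist_self_le: "supp_dist S R R \<le> 0"
  using supp_dist_le_iff[of S R R 0] by (simp add: zero_ereal_def)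

lemma supp_dist_triangle: "supp_dist S R R'' \<le> supp_dist S R R' + supp_dist S R' R''"
  unfolding supp_dist_def[of S R R'']
proof (rule SUP_least, clarsimp)
  fix x a assume "a \<in> S x"
  have "ereal \<bar>R x a - R'' x a\<bar> \<le> ereal \<bar>R x a - R' x a\<bar> + ereal \<bar>R' x a - R'' x a\<bar>"
    by simp
  also have "\<dots> \<le> supp_dist S R R' + supp_dist S R' R''"
    using \<open>a \<in> S x\<close> by (intro add_mono abs_le_supp_dist)
  finally show "ereal \<bar>R x a - R'' x a\<bar> \<le> supp_dist S R R' + supp_dist S R' R''" .
qed

lemma supp_dist_less_PInf_imp_bounded:
  assumes "supp_dist S R R' < \<infinity>"
  obtains B where "\<And>x a. a \<in> S x \<Longrightarrow> \<bar>R x a - R' x a\<bar> \<le> B"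
proof -
  obtain r where "supp_dist S R R' \<le> ereal r"
  proof (cases "supp_dist S R R'")
    case (real r)
    then show thesis using that[of r] by simp
  next
    case PInf
    with assms show thesis by simp
  next
    case MInf
    then show thesis using that[of 0] by simp
  qed
  then show thesis using that[of r] by (simp add: supp_dist_le_iff)
qed

lemma istopology_supp_balls:
  "istopology (\<lambda>U. \<forall>R\<in>U. \<exists>e>0. \<forall>R'. supp_dist S R R' < ereal e \<longrightarrow> R' \<in> U)"
  unfolding istopology_def
proof (intro conjI allI impI ballI)
  fix U V R
  assume U: "\<forall>R\<in>U. \<exists>e>0. \<forall>R'. supp_dist S R R' < ereal e \<longrightarrow> R' \<in> U"
    and V: "\<forall>R\<in>V. \<exists>e>0. \<forall>R'. supp_dist S R R' < ereal e \<longrightarrow> R' \<in> V"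
    and R: "R \<in> U \<inter> V"
  obtain e1 where "e1 > 0" and e1: "\<forall>R'. supp_dist S R R' < ereal e1 \<longrightarrow> R' \<in> U"
    using U R by blast
  obtain e2 where "e2 > 0" and e2: "\<forall>R'. supp_dist S R R' < ereal e2 \<longrightarrow> R' \<in> V"
    using V R by blast
  have "ereal (min e1 e2) \<le> ereal e1" "ereal (min e1 e2) \<le> ereal e2"
    by simp_all
  then have "supp_dist S R R' < ereal e1 \<and> supp_dist S R R' < ereal e2"
    if "supp_dist S R R' < ereal (min e1 e2)" for R'
    using that by (meson order.strict_trans2)
  with e1 e2 have "\<forall>R'. supp_dist S R R' < ereal (min e1 e2) \<longrightarrow> R' \<in> U \<inter> V"
    by blast
  moreover have "min e1 e2 > 0"
    using \<open>e1 > 0\<close> \<open>e2 > 0\<close> by simp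
  ultimately show "\<exists>e>0. \<forall>R'. supp_dist S R R' < ereal e \<longrightarrow> R' \<in> U \<inter> V"
    by blast
next
  fix \<U> R
  assume \<U>: "\<forall>U\<in>\<U>. \<forall>R\<in>U. \<exists>e>0. \<forall>R'. supp_dist S R R' < ereal e \<longrightarrow> R' \<in> U"
    and "R \<in> \<Union>\<U>"
  then obtain U where "U \<in> \<U>" "R \<in> U"
    by blast
  with \<U> obtain e where "e > 0" "\<forall>R'. supp_dist S R R' < ereal e \<longrightarrow> R' \<in> U"
    by blast
  with \<open>U \<in> \<U>\<close> show "\<exists>e>0. \<forall>R'. supp_dist S R R' < ereal e \<longrightarrow> R' \<in> \<Union>\<U>"
    by blast
qed

lemma openin_supp_top:
  "openin (supp_top S) U \<longleftrightarrow> (\<forall>R\<in>U. \<exists>e>0. \<forall>R'. supp_dist S R R' < ereal e \<longrightarrow> R' \<in> U)"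
  unfolding supp_top_def by (simp add: topology_inverse'[OF istopology_supp_balls])

lemma topspace_supp_top: "topspace (supp_top S) = UNIV"
proof -
  have "openin (supp_top S) UNIV"
    unfolding openin_supp_top by (simp add: gt_ex)
  from openin_subset[OF this] show ?thesis
    by auto
qed

lemma openin_supp_ball: "openin (supp_top S) {R. supp_dist S R0 R < ereal d}"
  unfolding openin_supp_top
proof (intro ballI)
  fix R assume "R \<in> {R. supp_dist S R0 R < ereal d}"
  then obtain r where r: "supp_dist S R0 R < ereal r" "ereal r < ereal d"
    using ereal_dense2 by blast
  have "supp_dist S R0 R' < ereal d" if "supp_dist S R R' < ereal (d - r)" for R'
  proof -
    have "supp_dist S R0 R' \<le> supp_dist S R0 R + supp_dist S R R'"
      by (rule supp_dist_triangle)
    also have "\<dots> \<le> ereal r + supp_dist S R R'"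
      using r by (intro add_right_mono) simp
    also have "\<dots> < ereal r + ereal (d - r)"
      using that by (cases "supp_dist S R R'") auto
    finally show ?thesis by simp
  qed
  then show "\<exists>e>0. \<forall>R'. supp_dist S R R' < ereal e \<longrightarrow> R' \<in> {R. supp_dist S R0 R < ereal d}"
    using r(2) by (intro exI[of _ "d - r"]) simp
qed

lemma continuous_map_supp_top_prodI:
  fixes f :: "('x \<Rightarrow> 'a \<Rightarrow> real) \<times> ('y \<Rightarrow> 'b \<Rightarrow> real) \<Rightarrow> real"
  assumes "\<And>R0 Q0 e. R0 \<in> F \<Longrightarrow> Q0 \<in> G \<Longrightarrow> e > 0 \<Longrightarrow> \<exists>d>0. \<forall>R\<in>F. \<forall>Q\<in>G.
      supp_dist S R0 R < ereal d \<longrightarrow> supp_dist T Q0 Q < ereal d \<longrightarrow> \<bar>f (R, Q) - f (R0, Q0)\<bar> < e"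
  shows "continuous_map (prod_topology (subtopology (supp_top S) F) (subtopology (supp_top T) G))
           euclideanreal f"
  unfolding Met_TC.continuous_map_to_metric[simplified mtopology_is_euclidean]
proof (intro ballI allI impI)
  fix z e
  assume "z \<in> topspace (prod_topology (subtopology (supp_top S) F) (subtopology (supp_top T) G))"
    and "(e::real) > 0"
  then obtain R0 Q0 where z: "z = (R0, Q0)" "R0 \<in> F" "Q0 \<in> G"
    by (cases z) (simp add: topspace_supp_top)
  then obtain d where "d > 0" and d: "\<forall>R\<in>F. \<forall>Q\<in>G.
      supp_dist S R0 R < ereal d \<longrightarrow> supp_dist T Q0 Q < ereal d \<longrightarrow> \<bar>f (R, Q) - f (R0, Q0)\<bar> < e"
    using assms[of R0 Q0 e] \<open>e > 0\<close> by blast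
  let ?U = "({R. supp_dist S R0 R < ereal d} \<inter> F) \<times> ({Q. supp_dist T Q0 Q < ereal d} \<inter> G)"
  have "openin (prod_topology (subtopology (supp_top S) F) (subtopology (supp_top T) G)) ?U"
    unfolding openin_prod_Times_iff by (intro disjI2 conjI openin_subtopology_Int openin_supp_ball)
  moreover have "z \<in> ?U"
    using z \<open>d > 0\<close> le_less_trans[OF supp_dist_self_le[of S R0], of "ereal d"]
      le_less_trans[OF supp_dist_self_le[of T Q0], of "ereal d"] by simp
  moreover have "f y \<in> Met_TC.mball (f z) e" if "y \<in> ?U" for y
  proof -
    obtain R Q where "y = (R, Q)" "R \<in> F" "Q \<in> G"
      "supp_dist S R0 R < ereal d" "supp_dist T Q0 Q < ereal d"
      using \<open>y \<in> ?U\<close> by blast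
    then show ?thesis
      using d z(1) by (simp add: dist_real_def abs_minus_commute[of "f (R0, Q0)"])
  qed
  ultimately show "\<exists>U. openin (prod_topology (subtopology (supp_top S) F) (subtopology (supp_top T) G)) U
      \<and> z \<in> U \<and> (\<forall>y\<in>U. f y \<in> Met_TC.mball (f z) e)"
    by blast
qed

lemma continuous_map_supp_top_prodI_lipschitz:
  fixes f :: "('x \<Rightarrow> 'a \<Rightarrow> real) \<times> ('y \<Rightarrow> 'b \<Rightarrow> real) \<Rightarrow> real"
  assumes "\<And>R0 Q0. R0 \<in> F \<Longrightarrow> Q0 \<in> G \<Longrightarrow> \<exists>C r. 0 < r \<and> (\<forall>d R Q. 0 < d \<longrightarrow> d \<le> r \<longrightarrow>
      R \<in> F \<longrightarrow> Q \<in> G \<longrightarrow> supp_dist S R0 R < ereal d \<longrightarrow> supp_dist T Q0 Q < ereal d \<longrightarrow>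
      \<bar>f (R, Q) - f (R0, Q0)\<bar> \<le> C * d)"
  shows "continuous_map (prod_topology (subtopology (supp_top S) F) (subtopology (supp_top T) G))
           euclideanreal f"
proof (rule continuous_map_supp_top_prodI)
  fix R0 Q0 e assume "R0 \<in> F" "Q0 \<in> G" "(e::real) > 0"
  then obtain C r where "0 < r" and lipschitz: "\<And>d R Q. 0 < d \<Longrightarrow> d \<le> r \<Longrightarrow> R \<in> F \<Longrightarrow> Q \<in> G \<Longrightarrow>
      supp_dist S R0 R < ereal d \<Longrightarrow> supp_dist T Q0 Q < ereal d \<Longrightarrow>
      \<bar>f (R, Q) - f (R0, Q0)\<bar> \<le> C * d"
    using assms by meson
  define d where "d = min r (e / (\<bar>C\<bar> + 1))"
  have "0 < d" "d \<le> r"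
    using \<open>0 < r\<close> \<open>e > 0\<close> by (simp_all add: d_def)
  have "d \<le> e / (\<bar>C\<bar> + 1)"
    unfolding d_def by (rule min.cobounded2)
  then have "(\<bar>C\<bar> + 1) * d \<le> e"
    by (simp add: pos_le_divide_eq mult.commute add_nonneg_pos)
  moreover have "C * d \<le> \<bar>C\<bar> * d"
    using \<open>0 < d\<close> by (intro mult_right_mono) auto
  ultimately have "C * d < e"
    using \<open>0 < d\<close> by (simp only: distrib_right mult_1)
  with lipschitz \<open>0 < d\<close> \<open>d \<le> r\<close>
  show "\<exists>d>0. \<forall>R\<in>F. \<forall>Q\<in>G. supp_dist S R0 R < ereal d \<longrightarrow> supp_dist T Q0 Q < ereal d \<longrightarrow>
      \<bar>f (R, Q) - f (R0, Q0)\<bar> < e"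
    by (meson le_less_trans)
qed

section \<open>Softmax choice probabilities and the expected log-loss\<close>

definition expected_logloss :: "nat \<Rightarrow> (nat \<Rightarrow> real) \<Rightarrow> (nat \<Rightarrow> real) \<Rightarrow> real" where
  "expected_logloss K v w = (\<Sum>y<K. choice_prob K v y * logloss K w y)"

lemma sum_exp_pos: "0 < K \<Longrightarrow> 0 < (\<Sum>k<(K::nat). exp (v k :: real))"
  by (intro sum_pos) auto

lemma choice_prob_nonneg: "0 \<le> choice_prob K v y"
  unfolding choice_prob_def by (intro divide_nonneg_nonneg sum_nonneg) auto

lemma sum_choice_prob: "0 < K \<Longrightarrow> (\<Sum>y<K. choice_prob K v y) = 1"
  unfolding choice_prob_def using sum_exp_pos[of K v] by (simp flip: sum_divide_distrib)

lemma abs_sum_choice_prob_mult_le: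
  assumes "0 < K" "\<And>k. k < K \<Longrightarrow> \<bar>w k\<bar> \<le> B"
  shows "\<bar>\<Sum>y<K. choice_prob K v y * w y\<bar> \<le> B"
proof -
  have "\<bar>\<Sum>y<K. choice_prob K v y * w y\<bar> \<le> (\<Sum>y<K. choice_prob K v y * B)"
    using assms(2) choice_prob_nonneg
    by (intro order_trans[OF sum_abs] sum_mono) (simp add: abs_mult mult_left_mono)
  also have "\<dots> = B"
    using sum_choice_prob[OF assms(1)] by (simp flip: sum_distrib_right)
  finally show ?thesis .
qed

lemma expected_logloss_eq:
  assumes "0 < K"
  shows "expected_logloss K v w = ln (\<Sum>k<K. exp (w k)) - (\<Sum>y<K. choice_prob K v y * w y)"
  using sum_choice_prob[OF assms, of v]
  by (simp add: expected_logloss_def logloss_def right_diff_distrib sum_subtractf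
      flip: sum_distrib_right)

lemma ln_sum_exp_le:
  fixes K :: nat and w w0 :: "nat \<Rightarrow> real"
  assumes "0 < K" "\<And>k. k < K \<Longrightarrow> w k \<le> w0 k + d"
  shows "ln (\<Sum>k<K. exp (w k)) \<le> ln (\<Sum>k<K. exp (w0 k)) + d"
proof -
  have "(\<Sum>k<K. exp (w k)) \<le> (\<Sum>k<K. exp d * exp (w0 k))"
    using assms(2) by (intro sum_mono) (simp flip: exp_add add: add.commute)
  also have "\<dots> = exp d * (\<Sum>k<K. exp (w0 k))"
    by (simp add: sum_distrib_left)
  finally have "ln (\<Sum>k<K. exp (w k)) \<le> ln (exp d * (\<Sum>k<K. exp (w0 k)))"
    using sum_exp_pos[OF assms(1), of w] by simp
  also have "\<dots> = ln (\<Sum>k<K. exp (w0 k)) + d"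
    using sum_exp_pos[OF assms(1), of w0] by (simp add: ln_mult)
  finally show ?thesis .
qed

lemma ln_sum_exp_lipschitz:
  fixes K :: nat and w w0 :: "nat \<Rightarrow> real"
  assumes "0 < K" "\<And>k. k < K \<Longrightarrow> \<bar>w k - w0 k\<bar> \<le> d"
  shows "\<bar>ln (\<Sum>k<K. exp (w k)) - ln (\<Sum>k<K. exp (w0 k))\<bar> \<le> d"
  using ln_sum_exp_le[OF assms(1), of w w0 d] ln_sum_exp_le[OF assms(1), of w0 w d] assms(2)
  by (force simp: abs_le_iff)

lemma choice_prob_le_exp_mult:
  assumes "0 < K" "\<And>k. k < K \<Longrightarrow> \<bar>v k - v0 k\<bar> \<le> d" "y < K"
  shows "choice_prob K v y \<le> exp (2 * d) * choice_prob K v0 y"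
proof -
  have num: "exp (v y) \<le> exp d * exp (v0 y)"
    using assms(2)[OF assms(3)] by (simp flip: exp_add add: abs_le_iff)
  have "exp (v0 k) \<le> exp d * exp (v k)" if "k < K" for k
    using assms(2)[OF that] by (simp flip: exp_add add: abs_le_iff)
  then have "(\<Sum>k<K. exp (v0 k)) \<le> (\<Sum>k<K. exp d * exp (v k))"
    by (intro sum_mono) simp
  then have "(\<Sum>k<K. exp (v0 k)) \<le> exp d * (\<Sum>k<K. exp (v k))"
    by (simp add: sum_distrib_left)
  then have den: "exp (- d) * (\<Sum>k<K. exp (v0 k)) \<le> (\<Sum>k<K. exp (v k))"
    by (simp add: exp_minus field_simps)
  have "choice_prob K v y \<le> (exp d * exp (v0 y)) / (exp (- d) * (\<Sum>k<K. exp (v0 k)))"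
    unfolding choice_prob_def using num den sum_exp_pos[OF assms(1)] by (intro frac_le) auto
  also have "\<dots> = exp (2 * d) * choice_prob K v0 y"
    unfolding choice_prob_def by (simp add: exp_minus field_simps flip: exp_add)
  finally show ?thesis .
qed

lemma abs_choice_prob_diff_le:
  assumes "0 < K" "\<And>k. k < K \<Longrightarrow> \<bar>v k - v0 k\<bar> \<le> d" "0 \<le> d" "d \<le> 1/4" "y < K"
  shows "\<bar>choice_prob K v y - choice_prob K v0 y\<bar> \<le> 4 * d * choice_prob K v0 y"
proof -
  have up: "choice_prob K v y \<le> exp (2 * d) * choice_prob K v0 y"
    using assms by (intro choice_prob_le_exp_mult)
  have "choice_prob K v0 y \<le> exp (2 * d) * choice_prob K v y"
    using assms by (intro choice_prob_le_exp_mult) (auto simp: abs_minus_commute)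
  then have lo: "exp (- (2 * d)) * choice_prob K v0 y \<le> choice_prob K v y"
    by (simp add: exp_minus field_simps)
  have "exp (2 * d) \<le> 1 + 4 * d"
    using exp_bound_lemma[of "2 * d"] assms(3,4) by simp
  moreover have "1 - 2 * d \<le> exp (- (2 * d))"
    using exp_ge_add_one_self[of "- (2 * d)"] by simp
  ultimately show ?thesis
    using up lo choice_prob_nonneg[of K v0 y] assms(3)
      mult_right_mono[of "exp (2 * d)" "1 + 4 * d" "choice_prob K v0 y"]
      mult_right_mono[of "1 - 2 * d" "exp (- (2 * d))" "choice_prob K v0 y"]
    by (simp add: abs_le_iff algebra_simps)
qed

lemma expected_logloss_lipschitz:
  assumes "0 < K" "0 \<le> d" "d \<le> 1/4"
    and "\<And>k. k < K \<Longrightarrow> \<bar>v k - v0 k\<bar> \<le> d" "\<And>k. k < K \<Longrightarrow> \<bar>w k - w0 k\<bar> \<le> d"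
    and "\<And>k. k < K \<Longrightarrow> \<bar>w0 k\<bar> \<le> B"
  shows "\<bar>expected_logloss K v w - expected_logloss K v0 w0\<bar> \<le> 2 * d + 4 * d * B"
proof -
  have "\<bar>(\<Sum>y<K. choice_prob K v y * w y) - (\<Sum>y<K. choice_prob K v y * w0 y)\<bar> \<le> d"
    using abs_sum_choice_prob_mult_le[OF assms(1), of "\<lambda>y. w y - w0 y" d v] assms(5)
    by (simp add: sum_subtractf right_diff_distrib)
  moreover have "\<bar>(\<Sum>y<K. choice_prob K v y * w0 y) - (\<Sum>y<K. choice_prob K v0 y * w0 y)\<bar>
      \<le> 4 * d * B"
  proof -
    have "\<bar>(\<Sum>y<K. choice_prob K v y * w0 y) - (\<Sum>y<K. choice_prob K v0 y * w0 y)\<bar>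
        \<le> (\<Sum>y<K. \<bar>(choice_prob K v y - choice_prob K v0 y) * w0 y\<bar>)"
      unfolding left_diff_distrib sum_subtractf[symmetric] by (rule sum_abs)
    also have "\<dots> \<le> (\<Sum>y<K. 4 * d * choice_prob K v0 y * B)"
      unfolding abs_mult using assms abs_choice_prob_diff_le choice_prob_nonneg
      by (intro sum_mono mult_mono) auto
    also have "\<dots> = 4 * d * B * (\<Sum>y<K. choice_prob K v0 y)"
      by (simp add: sum_distrib_left mult_ac)
    also have "\<dots> = 4 * d * B"
      using sum_choice_prob[OF assms(1)] by simp
    finally show ?thesis .
  qed
  ultimately show ?thesis
    using ln_sum_exp_lipschitz[where K=K and w=w and w0=w0 and d=d, OF assms(1,5)]
    unfolding expected_logloss_eq[OF assms(1)] by linarith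
qed

lemma abs_expected_logloss_le:
  assumes "0 < K" "\<And>k. k < K \<Longrightarrow> \<bar>w k\<bar> \<le> B"
  shows "\<bar>expected_logloss K v w\<bar> \<le> 2 * B + ln (real K)"
proof -
  have "\<bar>ln (\<Sum>k<K. exp (w k)) - ln (real K)\<bar> \<le> B"
    using ln_sum_exp_lipschitz[OF assms(1), of w "\<lambda>_. 0" B] assms(2) by simp
  moreover have "0 \<le> ln (real K)"
    using assms(1) by simp
  ultimately show ?thesis
    using abs_sum_choice_prob_mult_le[where K=K and w=w and B=B and v=v, OF assms]
    unfolding expected_logloss_eq[OF assms(1)] by linarith
qed

section \<open>Integrals against kernels\<close>

lemma AE_in_topo_support:
  fixes \<mu> :: "'a::{metric_space, second_countable_topology} measure"
  assumes "sets \<mu> = sets borel"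
  shows "AE a in \<mu>. a \<in> topo_support \<mu>"
proof -
  define \<N> where "\<N> = {U::'a set. open U \<and> emeasure \<mu> U = 0}"
  obtain \<N>' where \<N>': "\<N>' \<subseteq> \<N>" "countable \<N>'" "\<Union>\<N>' = \<Union>\<N>"
    using Lindelof[of \<N>] unfolding \<N>_def by blast
  have "(\<Union>U\<in>\<N>'. U) \<in> null_sets \<mu>"
    using \<N>' assms by (intro null_sets_UN') (auto simp: \<N>_def null_sets_def)
  moreover have "{a \<in> space \<mu>. a \<notin> topo_support \<mu>} \<subseteq> \<Union>\<N>"
    by (auto simp: topo_support_def \<N>_def not_gr_zero)
  then have "{a \<in> space \<mu>. a \<notin> topo_support \<mu>} \<subseteq> (\<Union>U\<in>\<N>'. U)"
    using \<N>'(3) by simp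
  ultimately show ?thesis
    by (rule AE_I')
qed

lemma AE_PiM_in_topo_support:
  fixes \<mu> :: "'a::{metric_space, second_countable_topology} measure"
  assumes "prob_space \<mu>" "sets \<mu> = sets borel" "finite I"
  shows "AE as in PiM I (\<lambda>_. \<mu>). \<forall>i\<in>I. as i \<in> topo_support \<mu>"
  using assms AE_in_topo_support[OF assms(2)]
  by (intro AE_finite_allI AE_PiM_component) auto

lemma measurable_PiM_iid_kernel:
  assumes \<pi>: "\<pi> \<in> M \<rightarrow>\<^sub>M prob_algebra N" and "finite I"
  shows "(\<lambda>x. PiM I (\<lambda>_. \<pi> x)) \<in> M \<rightarrow>\<^sub>M prob_algebra (PiM I (\<lambda>_. N))"
proof (rule measurable_prob_algebra_generated[OF sets_PiM Int_stable_prod_algebra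
      prod_algebra_sets_into_space])
  have \<pi>x: "sets (\<pi> x) = sets N" "prob_space (\<pi> x)" if "x \<in> space M" for x
    using measurable_space[OF \<pi> that] by (simp_all add: space_prob_algebra)
  show "prob_space (PiM I (\<lambda>_. \<pi> x))" if "x \<in> space M" for x
    using \<pi>x[OF that] by (intro prob_space_PiM) auto
  show "sets (PiM I (\<lambda>_. \<pi> x)) = sets (PiM I (\<lambda>_. N))" if "x \<in> space M" for x
    using \<pi>x[OF that] by (intro sets_PiM_cong) auto
  fix A assume "A \<in> prod_algebra I (\<lambda>_. N)"
  then obtain E where E: "A = Pi\<^sub>E I E" "E \<in> (\<Pi> i\<in>I. sets N)"
    by (rule prod_algebraE_all)
  have "emeasure (PiM I (\<lambda>_. \<pi> x)) A = (\<Prod>i\<in>I. emeasure (\<pi> x) (E i))" if "x \<in> space M" for x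
  proof -
    interpret product_sigma_finite "\<lambda>_. \<pi> x"
      using \<pi>x[OF that] by (simp add: product_sigma_finite_def prob_space_imp_sigma_finite)
    show ?thesis
      unfolding E(1) using E(2) \<pi>x[OF that] \<open>finite I\<close> by (intro emeasure_PiM) auto
  qed
  moreover have "(\<lambda>x. \<Prod>i\<in>I. emeasure (\<pi> x) (E i)) \<in> borel_measurable M"
    using E(2) measurable_compose[OF measurable_prob_algebraD[OF \<pi>] measurable_emeasure_subprob_algebra]
    by (intro borel_measurable_prod_ennreal) auto
  ultimately show "(\<lambda>x. emeasure (PiM I (\<lambda>_. \<pi> x)) A) \<in> borel_measurable M"
    by (simp cong: measurable_cong)
qed

lemma integral_measurable_subprob_algebra2:
  fixes f :: "'a \<Rightarrow> 'b \<Rightarrow> real"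
  assumes f[measurable]: "(\<lambda>(x, y). f x y) \<in> borel_measurable (M \<Otimes>\<^sub>M N)"
    and L[measurable]: "L \<in> M \<rightarrow>\<^sub>M subprob_algebra N"
  shows "(\<lambda>x. integral\<^sup>L (L x) (f x)) \<in> borel_measurable M"
proof -
  note integral_measurable_subprob_algebra[measurable] measurable_distr2[measurable]
  have "(\<lambda>x. integral\<^sup>L (distr (L x) (M \<Otimes>\<^sub>M N) (\<lambda>y. (x, y))) (\<lambda>(x, y). f x y))
      \<in> borel_measurable M"
    by measurable
  then show ?thesis
  proof (rule measurable_cong[THEN iffD1, rotated])
    fix x assume x: "x \<in> space M"
    have [measurable]: "(\<lambda>y. (x, y)) \<in> L x \<rightarrow>\<^sub>M M \<Otimes>\<^sub>M N"
      using x subprob_measurableD(3)[OF L x] by simp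
    show "integral\<^sup>L (distr (L x) (M \<Otimes>\<^sub>M N) (\<lambda>y. (x, y))) (\<lambda>(x, y). f x y)
        = integral\<^sup>L (L x) (f x)"
      by (subst integral_distr) auto
  qed
qed

lemma (in prob_space) abs_integral_le_const:
  fixes f :: "'a \<Rightarrow> real"
  assumes "integrable M f" "AE x in M. \<bar>f x\<bar> \<le> c"
  shows "\<bar>\<integral>x. f x \<partial>M\<bar> \<le> c"
proof -
  from assms(2) have "AE x in M. f x \<le> c" "AE x in M. - c \<le> f x"
    by (auto elim!: eventually_mono)
  then have "(\<integral>x. f x \<partial>M) \<le> c" "- c \<le> (\<integral>x. f x \<partial>M)"
    using assms(1) by (auto intro: integral_le_const integral_ge_const)
  then show ?thesis
    by (simp add: abs_le_iff)
qed

lemma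
  fixes h :: "'a \<Rightarrow> 'b \<Rightarrow> real"
  assumes N: "N \<in> M \<rightarrow>\<^sub>M prob_algebra A" and h: "(\<lambda>(x, y). h x y) \<in> borel_measurable (M \<Otimes>\<^sub>M A)"
    and x: "x \<in> space M" and "AE y in N x. \<bar>h x y\<bar> \<le> B"
  shows integrable_kernel_section: "integrable (N x) (h x)"
    and abs_integral_kernel_section_le: "\<bar>\<integral>y. h x y \<partial>N x\<bar> \<le> B"
proof -
  have "prob_space (N x)" "sets (N x) = sets A"
    using measurable_space[OF N x] by (simp_all add: space_prob_algebra)
  interpret Nx: prob_space "N x" by fact
  have "h x \<in> borel_measurable (N x)"
    using measurable_Pair2[OF h x] \<open>sets (N x) = sets A\<close> by (simp cong: measurable_cong_sets)
  with assms(4) show "integrable (N x) (h x)"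
    by (intro Nx.integrable_const_bound[where B = B]) auto
  with assms(4) show "\<bar>\<integral>y. h x y \<partial>N x\<bar> \<le> B"
    by (intro Nx.abs_integral_le_const)
qed

lemma integrable_kernel_integral:
  fixes h :: "'a \<Rightarrow> 'b \<Rightarrow> real"
  assumes "finite_measure M" and N: "N \<in> M \<rightarrow>\<^sub>M prob_algebra A"
    and h: "(\<lambda>(x, y). h x y) \<in> borel_measurable (M \<Otimes>\<^sub>M A)"
    and "\<And>x. x \<in> space M \<Longrightarrow> AE y in N x. \<bar>h x y\<bar> \<le> B"
  shows "integrable M (\<lambda>x. \<integral>y. h x y \<partial>N x)"
  using assms abs_integral_kernel_section_le[OF N h]
    integral_measurable_subprob_algebra2[OF h measurable_prob_algebraD[OF N]]
  by (intro finite_measure.integrable_const_bound[where B = B]) auto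

lemma abs_integral_kernel_diff_le:
  fixes f g :: "'a \<Rightarrow> 'b \<Rightarrow> real"
  assumes "prob_space M" and N: "N \<in> M \<rightarrow>\<^sub>M prob_algebra A"
    and f: "(\<lambda>(x, y). f x y) \<in> borel_measurable (M \<Otimes>\<^sub>M A)"
    and g: "(\<lambda>(x, y). g x y) \<in> borel_measurable (M \<Otimes>\<^sub>M A)"
    and bounds: "\<And>x. x \<in> space M \<Longrightarrow>
      AE y in N x. \<bar>f x y\<bar> \<le> B \<and> \<bar>g x y\<bar> \<le> B \<and> \<bar>f x y - g x y\<bar> \<le> c"
  shows "\<bar>(\<integral>x. (\<integral>y. f x y \<partial>N x) \<partial>M) - (\<integral>x. (\<integral>y. g x y \<partial>N x) \<partial>M)\<bar> \<le> c"
proof -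
  interpret prob_space M by fact
  have bound_f: "AE y in N x. \<bar>f x y\<bar> \<le> B" and bound_g: "AE y in N x. \<bar>g x y\<bar> \<le> B"
    if "x \<in> space M" for x
    using bounds[OF that] by (auto elim!: eventually_mono)
  have "\<bar>(\<integral>y. f x y \<partial>N x) - (\<integral>y. g x y \<partial>N x)\<bar> \<le> c" if x: "x \<in> space M" for x
  proof -
    interpret Nx: prob_space "N x"
      using measurable_space[OF N x] by (simp add: space_prob_algebra)
    have "integrable (N x) (f x)" "integrable (N x) (g x)"
      using integrable_kernel_section[OF N f x bound_f] integrable_kernel_section[OF N g x bound_g]
        x by blast+
    then show ?thesis
      using bounds[OF x] Nx.abs_integral_le_const[of "\<lambda>y. f x y - g x y" c]
      by (auto elim!: eventually_mono)
  qed
  moreover have int_f: "integrable M (\<lambda>x. \<integral>y. f x y \<partial>N x)"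
    using bound_f by (intro integrable_kernel_integral[OF _ N f]) simp_all
  moreover have int_g: "integrable M (\<lambda>x. \<integral>y. g x y \<partial>N x)"
    using bound_g by (intro integrable_kernel_integral[OF _ N g]) simp_all
  ultimately have "\<bar>\<integral>x. (\<integral>y. f x y \<partial>N x) - (\<integral>y. g x y \<partial>N x) \<partial>M\<bar> \<le> c"
    by (intro abs_integral_le_const AE_I2) auto
  with int_f int_g show ?thesis
    by simp
qed

section \<open>Continuity of the population loss\<close>

lemma pop_loss_eq_expected_logloss:
  "pop_loss d0 \<pi>0 K Rs R =
     (\<integral>x. (\<integral>as. expected_logloss K (\<lambda>k. Rs x (as k)) (\<lambda>k. R x (as k))
        \<partial>PiM {..<K} (\<lambda>_. \<pi>0 x)) \<partial>d0)"
  unfolding pop_loss_def expected_logloss_def ..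

lemma measurable_expected_logloss:
  assumes "(\<lambda>(x, a). R1 x a) \<in> borel_measurable (M \<Otimes>\<^sub>M N)"
    and "(\<lambda>(x, a). R2 x a) \<in> borel_measurable (M \<Otimes>\<^sub>M N)"
  shows "(\<lambda>(x, as). expected_logloss K (\<lambda>k. R1 x (as k)) (\<lambda>k. R2 x (as k)))
           \<in> borel_measurable (M \<Otimes>\<^sub>M PiM {..<K} (\<lambda>_. N))"
proof -
  have eval: "(\<lambda>(x, as). (x, as k)) \<in> M \<Otimes>\<^sub>M PiM {..<K} (\<lambda>_. N) \<rightarrow>\<^sub>M M \<Otimes>\<^sub>M N"
    if "k \<in> {..<K}" for k
    using that by measurable
  have [measurable]:
    "(\<lambda>z. R1 (fst z) (snd z k)) \<in> borel_measurable (M \<Otimes>\<^sub>M PiM {..<K} (\<lambda>_. N))"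
    "(\<lambda>z. R2 (fst z) (snd z k)) \<in> borel_measurable (M \<Otimes>\<^sub>M PiM {..<K} (\<lambda>_. N))"
    if "k \<in> {..<K}" for k
    using measurable_compose[OF eval[OF that] assms(1)] measurable_compose[OF eval[OF that] assms(2)]
    by (simp_all add: case_prod_beta)
  show ?thesis
    unfolding expected_logloss_def choice_prob_def logloss_def case_prod_beta by measurable
qed

lemma abs_pop_loss_diff_le:
  fixes \<pi>0 :: "'x \<Rightarrow> 'a::{metric_space, second_countable_topology} measure"
  assumes "prob_space d0" and \<pi>0: "\<pi>0 \<in> d0 \<rightarrow>\<^sub>M prob_algebra borel" and "0 < K"
    and meas: "\<And>U. U \<in> {Rs, R, Qs, Q} \<Longrightarrow> (\<lambda>(x, a). U x a) \<in> borel_measurable (d0 \<Otimes>\<^sub>M borel)"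
    and bound: "\<And>x a. a \<in> topo_support (\<pi>0 x) \<Longrightarrow> \<bar>R x a\<bar> \<le> B \<and> \<bar>Q x a\<bar> \<le> B"
    and close: "\<And>x a. a \<in> topo_support (\<pi>0 x) \<Longrightarrow> \<bar>Rs x a - Qs x a\<bar> \<le> \<delta> \<and> \<bar>R x a - Q x a\<bar> \<le> \<delta>"
    and "0 \<le> \<delta>" "\<delta> \<le> 1/4"
  shows "\<bar>pop_loss d0 \<pi>0 K Rs R - pop_loss d0 \<pi>0 K Qs Q\<bar> \<le> 2 * \<delta> + 4 * \<delta> * B"
  unfolding pop_loss_eq_expected_logloss
proof (rule abs_integral_kernel_diff_le[where B = "2 * B + ln (real K)", OF \<open>prob_space d0\<close>])
  show "(\<lambda>x. PiM {..<K} (\<lambda>_. \<pi>0 x)) \<in> d0 \<rightarrow>\<^sub>M prob_algebra (PiM {..<K} (\<lambda>_. borel))"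
    using \<pi>0 by (rule measurable_PiM_iid_kernel) simp
  show "(\<lambda>(x, as). expected_logloss K (\<lambda>k. Rs x (as k)) (\<lambda>k. R x (as k)))
      \<in> borel_measurable (d0 \<Otimes>\<^sub>M PiM {..<K} (\<lambda>_. borel))"
    "(\<lambda>(x, as). expected_logloss K (\<lambda>k. Qs x (as k)) (\<lambda>k. Q x (as k)))
      \<in> borel_measurable (d0 \<Otimes>\<^sub>M PiM {..<K} (\<lambda>_. borel))"
    using meas by (auto intro!: measurable_expected_logloss)
  fix x assume "x \<in> space d0"
  then have "sets (\<pi>0 x) = sets borel" "prob_space (\<pi>0 x)"
    using measurable_space[OF \<pi>0] by (simp_all add: space_prob_algebra)
  then have "AE as in PiM {..<K} (\<lambda>_. \<pi>0 x). \<forall>k\<in>{..<K}. as k \<in> topo_support (\<pi>0 x)"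
    by (intro AE_PiM_in_topo_support) auto
  then show "AE as in PiM {..<K} (\<lambda>_. \<pi>0 x).
      \<bar>expected_logloss K (\<lambda>k. Rs x (as k)) (\<lambda>k. R x (as k))\<bar> \<le> 2 * B + ln (real K) \<and>
      \<bar>expected_logloss K (\<lambda>k. Qs x (as k)) (\<lambda>k. Q x (as k))\<bar> \<le> 2 * B + ln (real K) \<and>
      \<bar>expected_logloss K (\<lambda>k. Rs x (as k)) (\<lambda>k. R x (as k))
        - expected_logloss K (\<lambda>k. Qs x (as k)) (\<lambda>k. Q x (as k))\<bar> \<le> 2 * \<delta> + 4 * \<delta> * B"
    using assms(3,7,8) bound close
    by (elim eventually_mono) (auto intro!: abs_expected_logloss_le expected_logloss_lipschitz)
qed

lemma continuous_map_pop_loss_diff: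
  fixes \<pi>0 :: "'x \<Rightarrow> 'a::{metric_space, second_countable_topology} measure"
  assumes "prob_space d0" "\<pi>0 \<in> d0 \<rightarrow>\<^sub>M prob_algebra borel" "0 < K"
    and support: "\<And>x. topo_support (\<pi>0 x) \<subseteq> S x"
    and meas: "\<And>R. R \<in> F \<Longrightarrow> (\<lambda>(x, a). R x a) \<in> borel_measurable (d0 \<Otimes>\<^sub>M borel)"
    and bounded: "\<And>R. R \<in> F \<Longrightarrow> supp_dist S R (\<lambda>_ _. 0) < \<infinity>"
  shows "continuous_map (prod_topology (subtopology (supp_top S) F) (subtopology (supp_top S) F))
           euclideanreal (\<lambda>(Rs, R). pop_loss d0 \<pi>0 K Rs R - pop_loss d0 \<pi>0 K Rs Rs)"
proof (rule continuous_map_supp_top_prodI_lipschitz)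
  fix Rs0 R0 assume "Rs0 \<in> F" "R0 \<in> F"
  obtain B1 B2 where B1: "\<And>x a. a \<in> S x \<Longrightarrow> \<bar>Rs0 x a\<bar> \<le> B1"
    and B2: "\<And>x a. a \<in> S x \<Longrightarrow> \<bar>R0 x a\<bar> \<le> B2"
    using supp_dist_less_PInf_imp_bounded[OF bounded[OF \<open>Rs0 \<in> F\<close>]]
      supp_dist_less_PInf_imp_bounded[OF bounded[OF \<open>R0 \<in> F\<close>]] by (metis diff_zero)
  define B where "B = max \<bar>B1\<bar> \<bar>B2\<bar> + 1"
  have "\<bar>pop_loss d0 \<pi>0 K Rs R - pop_loss d0 \<pi>0 K Rs Rs
      - (pop_loss d0 \<pi>0 K Rs0 R0 - pop_loss d0 \<pi>0 K Rs0 Rs0)\<bar> \<le> (4 + 8 * B) * d"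
    if "0 < d" "d \<le> 1/4" "Rs \<in> F" "R \<in> F"
      and "supp_dist S Rs0 Rs < ereal d" "supp_dist S R0 R < ereal d" for d Rs R
  proof -
    have close: "\<bar>Rs x a - Rs0 x a\<bar> \<le> d" "\<bar>R x a - R0 x a\<bar> \<le> d"
      if "a \<in> topo_support (\<pi>0 x)" for x a
      using that support abs_less_of_supp_dist_less[where S=S and x=x] \<open>supp_dist S Rs0 Rs < ereal d\<close>
        \<open>supp_dist S R0 R < ereal d\<close>
      by (fastforce simp: abs_minus_commute[of "Rs0 x a"] abs_minus_commute[of "R0 x a"])+
    have bound: "\<bar>U x a\<bar> \<le> B" if "U \<in> {Rs, R, Rs0, R0}" "a \<in> topo_support (\<pi>0 x)" for U x a
    proof -
      have "a \<in> S x"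
        using that(2) support by blast
      then have "\<bar>Rs0 x a\<bar> \<le> B - 1" "\<bar>R0 x a\<bar> \<le> B - 1"
        using B1[of a x] B2[of a x] by (simp_all add: B_def le_max_iff_disj)
      then show ?thesis
        using that(1) close[OF that(2)] \<open>d \<le> 1/4\<close> by (auto simp: abs_le_iff)
    qed
    have "\<bar>pop_loss d0 \<pi>0 K Rs R - pop_loss d0 \<pi>0 K Rs0 R0\<bar> \<le> 2 * d + 4 * d * B"
      using assms(1-3) meas \<open>Rs \<in> F\<close> \<open>R \<in> F\<close> \<open>Rs0 \<in> F\<close> \<open>R0 \<in> F\<close> bound close that(1,2)
      by (intro abs_pop_loss_diff_le) auto
    moreover have "\<bar>pop_loss d0 \<pi>0 K Rs Rs - pop_loss d0 \<pi>0 K Rs0 Rs0\<bar> \<le> 2 * d + 4 * d * B"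
      using assms(1-3) meas \<open>Rs \<in> F\<close> \<open>Rs0 \<in> F\<close> bound close that(1,2)
      by (intro abs_pop_loss_diff_le) auto
    ultimately show ?thesis
      by (simp add: abs_le_iff algebra_simps)
  qed
  then show "\<exists>C r. 0 < r \<and> (\<forall>d Rs R. 0 < d \<longrightarrow> d \<le> r \<longrightarrow> Rs \<in> F \<longrightarrow> R \<in> F \<longrightarrow>
      supp_dist S Rs0 Rs < ereal d \<longrightarrow> supp_dist S R0 R < ereal d \<longrightarrow>
      \<bar>(case (Rs, R) of (Rs, R) \<Rightarrow> pop_loss d0 \<pi>0 K Rs R - pop_loss d0 \<pi>0 K Rs Rs)
        - (case (Rs0, R0) of (Rs, R) \<Rightarrow> pop_loss d0 \<pi>0 K Rs R - pop_loss d0 \<pi>0 K Rs Rs)\<bar>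
        \<le> C * d)"
    by (intro exI[of _ "4 + 8 * B"] exI[of _ "1/4"]) simp
qed

section \<open>Continuity of the suboptimality gap\<close>

lemma le_diff_of_ereal_SUP_margin:
  assumes "ereal c - (SUP a\<in>T. ereal (f a)) \<ge> ereal \<Delta>" "a \<in> T"
  shows "f a \<le> c - \<Delta>"
proof -
  have "ereal c - (SUP a\<in>T. ereal (f a)) \<le> ereal c - ereal (f a)"
    using assms(2) by (intro ereal_minus_mono order_refl SUP_upper)
  with assms(1) have "ereal \<Delta> \<le> ereal c - ereal (f a)"
    by (rule order_trans)
  then show ?thesis
    by simp
qed

lemma argmax_eq_of_margin:
  fixes f f0 :: "'a \<Rightarrow> real"
  assumes margin: "\<forall>a\<in>T. a \<noteq> a0 \<longrightarrow> f0 a \<le> f0 a0 - \<Delta>" and "a0 \<in> T"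
    and close: "\<forall>a\<in>T. \<bar>f a - f0 a\<bar> < \<Delta> / 2"
    and "a1 \<in> T" "\<forall>a\<in>T. f a \<le> f a1"
  shows "a1 = a0"
proof (rule ccontr)
  assume "a1 \<noteq> a0"
  then have "f0 a1 \<le> f0 a0 - \<Delta>" "f a0 \<le> f a1"
    using assms by auto
  moreover have "\<bar>f a1 - f0 a1\<bar> < \<Delta> / 2" "\<bar>f a0 - f0 a0\<bar> < \<Delta> / 2"
    using close \<open>a0 \<in> T\<close> \<open>a1 \<in> T\<close> by auto
  ultimately show False
    using abs_ge_self[of "f a1 - f0 a1"] abs_ge_minus_self[of "f a0 - f0 a0"] by linarith
qed

lemma AE_argmax_eq_of_supp_dist_less:
  assumes margin: "AE x in M. \<forall>a\<in>S x. a \<noteq> a0 x \<longrightarrow> R0 x a \<le> R0 x (a0 x) - \<Delta>"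
    and a0: "\<And>x. a0 x \<in> S x"
    and a1: "\<And>x. a1 x \<in> S x \<and> (\<forall>a\<in>S x. R x a \<le> R x (a1 x))"
    and close: "supp_dist S R0 R < ereal (\<Delta> / 2)"
  shows "AE x in M. a1 x = a0 x"
  using margin
proof (rule eventually_mono)
  fix x assume "\<forall>a\<in>S x. a \<noteq> a0 x \<longrightarrow> R0 x a \<le> R0 x (a0 x) - \<Delta>"
  moreover have "\<forall>a\<in>S x. \<bar>R x a - R0 x a\<bar> < \<Delta> / 2"
    using abs_less_of_supp_dist_less[OF close] by (simp add: abs_minus_commute)
  ultimately show "a1 x = a0 x"
    using a0 a1 by (intro argmax_eq_of_margin[where T = "S x"]) auto
qed

lemma integrable_eval_selection:
  fixes R :: "'x \<Rightarrow> 'a::topological_space \<Rightarrow> real"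
  assumes "finite_measure M" and R: "(\<lambda>(x, a). R x a) \<in> borel_measurable (M \<Otimes>\<^sub>M borel)"
    and s: "s \<in> M \<rightarrow>\<^sub>M borel" and "\<And>x. s x \<in> S x" "\<And>x a. a \<in> S x \<Longrightarrow> \<bar>R x a\<bar> \<le> B"
  shows "integrable M (\<lambda>x. R x (s x))"
proof -
  have "(\<lambda>x. R x (s x)) \<in> borel_measurable M"
    using measurable_compose[OF measurable_Pair[OF measurable_ident_sets[OF refl] s] R] by simp
  then show ?thesis
    using assms(4,5) by (intro finite_measure.integrable_const_bound[OF assms(1), where B = B]) auto
qed

lemma abs_gap_G_diff_le:
  assumes "prob_space d0"
    and int: "\<And>Q U. Q \<in> {Rs, Rs0} \<Longrightarrow> U \<in> {Rs, R, Rs0, R0} \<Longrightarrow> integrable d0 (\<lambda>x. Q x (amax U x))"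
    and frozen: "AE x in d0. amax Rs x = amax Rs0 x" "AE x in d0. amax R x = amax R0 x"
    and "\<And>x. amax Rs0 x \<in> S x" "\<And>x. amax R0 x \<in> S x"
    and close: "supp_dist S Rs0 Rs < ereal d"
  shows "\<bar>gap_G d0 amax Rs R - gap_G d0 amax Rs0 R0\<bar> \<le> 2 * d"
proof -
  interpret prob_space d0 by fact
  from frozen have frozen_gap:
    "AE x in d0. Rs x (amax Rs x) - Rs x (amax R x) = Rs x (amax Rs0 x) - Rs x (amax R0 x)"
    by eventually_elim simp
  have "gap_G d0 amax Rs R = (\<integral>x. Rs x (amax Rs0 x) - Rs x (amax R0 x) \<partial>d0)"
    unfolding gap_G_def using int
    by (intro integral_cong_AE[OF _ _ frozen_gap] borel_measurable_diff borel_measurable_integrable)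
      auto
  then have "gap_G d0 amax Rs R - gap_G d0 amax Rs0 R0 = (\<integral>x.
      (Rs x (amax Rs0 x) - Rs0 x (amax Rs0 x)) - (Rs x (amax R0 x) - Rs0 x (amax R0 x)) \<partial>d0)"
    unfolding gap_G_def using int by simp
  also have "\<bar>\<dots>\<bar> \<le> 2 * d"
  proof (rule abs_integral_le_const)
    have "\<bar>Rs x a - Rs0 x a\<bar> < d" if "a \<in> S x" for x a
      using abs_less_of_supp_dist_less[OF close that] by (simp add: abs_minus_commute)
    then show "AE x in d0. \<bar>(Rs x (amax Rs0 x) - Rs0 x (amax Rs0 x))
        - (Rs x (amax R0 x) - Rs0 x (amax R0 x))\<bar> \<le> 2 * d"
      using assms(5,6) by (intro AE_I2) (smt (verit))
  qed (use int in simp)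
  finally show ?thesis .
qed

lemma continuous_map_gap_G:
  fixes amax :: "('x \<Rightarrow> 'a::topological_space \<Rightarrow> real) \<Rightarrow> 'x \<Rightarrow> 'a"
  assumes "prob_space d0"
    and meas: "\<And>R. R \<in> F \<Longrightarrow> (\<lambda>(x, a). R x a) \<in> borel_measurable (d0 \<Otimes>\<^sub>M borel)"
    and bounded: "\<And>R. R \<in> F \<Longrightarrow> supp_dist S R (\<lambda>_ _. 0) < \<infinity>"
    and amax_meas: "\<And>R. R \<in> F \<Longrightarrow> amax R \<in> d0 \<rightarrow>\<^sub>M borel"
    and argmax: "\<And>R x. R \<in> F \<Longrightarrow> amax R x \<in> S x \<and> (\<forall>a\<in>S x. R x a \<le> R x (amax R x))"
    and "0 < \<Delta>"
    and margin: "\<And>R. R \<in> F \<Longrightarrow>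
      AE x in d0. \<forall>a\<in>S x. a \<noteq> amax R x \<longrightarrow> R x a \<le> R x (amax R x) - \<Delta>"
  shows "continuous_map (prod_topology (subtopology (supp_top S) F) (subtopology (supp_top S) F))
           euclideanreal (\<lambda>(Rs, R). gap_G d0 amax Rs R)"
proof (rule continuous_map_supp_top_prodI_lipschitz)
  have integrable: "integrable d0 (\<lambda>x. Q x (amax U x))" if "Q \<in> F" "U \<in> F" for Q U
  proof -
    obtain B where "\<And>x a. a \<in> S x \<Longrightarrow> \<bar>Q x a\<bar> \<le> B"
      using supp_dist_less_PInf_imp_bounded[OF bounded[OF \<open>Q \<in> F\<close>]] by (metis diff_zero)
    with that meas amax_meas argmax \<open>prob_space d0\<close> show ?thesis
      by (intro integrable_eval_selection[where S = S and B = B]) (auto simp: prob_space_def)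
  qed
  fix Rs0 R0 assume "Rs0 \<in> F" "R0 \<in> F"
  have "\<bar>gap_G d0 amax Rs R - gap_G d0 amax Rs0 R0\<bar> \<le> 2 * d"
    if "d \<le> \<Delta> / 2" "Rs \<in> F" "R \<in> F" "supp_dist S Rs0 Rs < ereal d" "supp_dist S R0 R < ereal d"
    for d Rs R
  proof (rule abs_gap_G_diff_le[OF \<open>prob_space d0\<close>])
    have "ereal d \<le> ereal (\<Delta> / 2)"
      using that(1) by simp
    then have "supp_dist S Rs0 Rs < ereal (\<Delta> / 2)" "supp_dist S R0 R < ereal (\<Delta> / 2)"
      using that(4,5) by (auto intro: order.strict_trans2)
    then show "AE x in d0. amax Rs x = amax Rs0 x" "AE x in d0. amax R x = amax R0 x"
      using argmax \<open>Rs \<in> F\<close> \<open>R \<in> F\<close> \<open>Rs0 \<in> F\<close> \<open>R0 \<in> F\<close>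
      by (intro AE_argmax_eq_of_supp_dist_less[where S = S, OF margin]; simp)+
  qed (use integrable that argmax \<open>Rs0 \<in> F\<close> \<open>R0 \<in> F\<close> in auto)
  then show "\<exists>C r. 0 < r \<and> (\<forall>d Rs R. 0 < d \<longrightarrow> d \<le> r \<longrightarrow> Rs \<in> F \<longrightarrow> R \<in> F \<longrightarrow>
      supp_dist S Rs0 Rs < ereal d \<longrightarrow> supp_dist S R0 R < ereal d \<longrightarrow>
      \<bar>(case (Rs, R) of (Rs, R) \<Rightarrow> gap_G d0 amax Rs R)
        - (case (Rs0, R0) of (Rs, R) \<Rightarrow> gap_G d0 amax Rs R)\<bar> \<le> C * d)"
    using \<open>0 < \<Delta>\<close> by (intro exI[of _ 2] exI[of _ "\<Delta> / 2"]) simp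
qed

theorem lemma13:
  fixes d0 :: "'x measure"
    and \<pi>0 :: "'x \<Rightarrow> ('a::{metric_space, second_countable_topology}) measure"
    and amax :: "('x \<Rightarrow> 'a \<Rightarrow> real) \<Rightarrow> 'x \<Rightarrow> 'a"
    and P :: "'p set"
    and Rp :: "'p \<Rightarrow> ('x \<Rightarrow> 'a \<Rightarrow> real)"
    and K :: nat
    and \<Delta>min :: real
  defines "S \<equiv> (\<lambda>x. topo_support (\<pi>0 x))"
  defines "F \<equiv> Rp ` P"
  assumes d0: "prob_space d0"
    and kernel: "\<pi>0 \<in> d0 \<rightarrow>\<^sub>M prob_algebra (borel :: 'a measure)"
    and meas: "\<And>p. p \<in> P \<Longrightarrow> (\<lambda>(x, a). Rp p x a) \<in> borel_measurable (d0 \<Otimes>\<^sub>M borel)"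
    and centered: "\<And>p x. p \<in> P \<Longrightarrow> (\<integral>a. Rp p x a \<partial>(\<pi>0 x)) = 0"
    and bounded: "\<And>R. R \<in> F \<Longrightarrow> supp_dist S R (\<lambda>_ _. 0) < \<infinity>"
    and tb_meas: "\<And>R. R \<in> F \<Longrightarrow> amax R \<in> d0 \<rightarrow>\<^sub>M (borel :: 'a measure)"
    and tb_argmax: "\<And>R x. R \<in> F \<Longrightarrow> amax R x \<in> S x \<and> (\<forall>a\<in>S x. R x a \<le> R x (amax R x))"
    and C1_compact: "compactin (supp_top S) F"
    and C1_cont: "\<And>R. R \<in> F \<Longrightarrow> (AE x in d0. continuous_on (S x) (R x))"
    and C2_pos: "\<Delta>min > 0"
    and C2: "\<And>p. p \<in> P \<Longrightarrow> (AE x in d0.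
              (\<forall>a\<in>S x. a \<noteq> amax (Rp p) x \<longrightarrow> Rp p x a < Rp p x (amax (Rp p) x)) \<and>
              ereal (Rp p x (amax (Rp p) x)) - (SUP a \<in> S x - {amax (Rp p) x}. ereal (Rp p x a))
                \<ge> ereal \<Delta>min)"
    and K: "K \<ge> 2"
  shows "continuous_map (prod_topology (subtopology (supp_top S) F) (subtopology (supp_top S) F))
           euclideanreal (\<lambda>(Rs, R). gap_G d0 amax Rs R) \<and>
         continuous_map (prod_topology (subtopology (supp_top S) F) (subtopology (supp_top S) F))
           euclideanreal (\<lambda>(Rs, R). pop_loss d0 \<pi>0 K Rs R - pop_loss d0 \<pi>0 K Rs Rs)"
proof -
  have meas_F: "(\<lambda>(x, a). R x a) \<in> borel_measurable (d0 \<Otimes>\<^sub>M borel)" if "R \<in> F" for R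
    using that meas unfolding F_def by blast
  have margin: "AE x in d0. \<forall>a\<in>S x. a \<noteq> amax R x \<longrightarrow> R x a \<le> R x (amax R x) - \<Delta>min"
    if "R \<in> F" for R
  proof -
    obtain p where "p \<in> P" "R = Rp p"
      using \<open>R \<in> F\<close> unfolding F_def by blast
    from C2[OF \<open>p \<in> P\<close>] show ?thesis
      unfolding \<open>R = Rp p\<close> by (rule eventually_mono) (auto intro: le_diff_of_ereal_SUP_margin)
  qed
  have "continuous_map (prod_topology (subtopology (supp_top S) F) (subtopology (supp_top S) F))
      euclideanreal (\<lambda>(Rs, R). gap_G d0 amax Rs R)"
    using d0 meas_F bounded tb_meas tb_argmax C2_pos margin by (rule continuous_map_gap_G)
  moreover have "continuous_map (prod_topology (subtopology (supp_top S) F) (subtopology (supp_top S) F))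
      euclideanreal (\<lambda>(Rs, R). pop_loss d0 \<pi>0 K Rs R - pop_loss d0 \<pi>0 K Rs Rs)"
    by (rule continuous_map_pop_loss_diff[OF d0 kernel _ _ meas_F bounded])
      (use K in \<open>simp_all add: S_def\<close>)
  ultimately show ?thesis ..
qed

end
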